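(* Let $n\ge2$, $l\ge1$, $a_1,\ldots,a_l\ge2$ be integers with $a_1+\cdots+a_l=n$, and let \[\mathcal F(w,q)=\sum_{d=0}^{\infty}q^d\frac{\prod_{k=1}^l\prod_{r=1}^{a_kd}(a_kw+r)}{\prod_{r=1}^d\left[(w+r)^n-w^n\right]}.\] Then $\mathbf M^n\mathcal F=\mathcal F$.
   Context: $\mathcal P\subset1+q\,\mathbb Q(w)[[q]]$ denotes the set of power series in $q$ with constant term $1$ whose coefficients are rational functions of $w$ regular at $w=0$; $\mathcal F\in\mathcal P$. The map $\mathbf M:\mathcal P\to\mathcal P$ is $\mathbf MF(w,q)=\left\{1+\frac{q}{w}\frac{d}{dq}\right\}\frac{F(w,q)}{F(0,q)}$. *)

theory Defs
  imports "HOL-Computational_Algebra.Polynomial" "HOL-Computational_Algebra.Fraction_Field"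
          "HOL-Computational_Algebra.Formal_Power_Series"
begin

text \<open>Coefficient field Q(w) is modelled as rat poly fract (w = the polynomial variable).\<close>

definition wvar :: "rat poly fract" where
  "wvar = Fract [:0, 1:] 1"

definition const_fr :: "rat \<Rightarrow> rat poly fract" where
  "const_fr c = Fract [:c:] 1"

definition regular0 :: "rat poly fract \<Rightarrow> bool" where
  "regular0 x \<longleftrightarrow> (\<exists>p q. poly q 0 \<noteq> 0 \<and> x = Fract p q)"

definition eval0 :: "rat poly fract \<Rightarrow> rat" where
  "eval0 x = (THE c. \<exists>p q. poly q 0 \<noteq> 0 \<and> x = Fract p q \<and> c = poly p 0 / poly q 0)"

definition Pset :: "rat poly fract fps set" where
  "Pset = {F. fps_nth F 0 = 1 \<and> (\<forall>d. regular0 (fps_nth F d))}"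

definition at0 :: "rat poly fract fps \<Rightarrow> rat poly fract fps" where
  "at0 F = Abs_fps (\<lambda>d. const_fr (eval0 (fps_nth F d)))"

definition Mop :: "rat poly fract fps \<Rightarrow> rat poly fract fps" where
  "Mop F = (let G = F * inverse (at0 F)
            in G + fps_const (inverse wvar) * (fps_X * fps_deriv G))"

definition calF :: "nat \<Rightarrow> (nat \<Rightarrow> nat) \<Rightarrow> nat \<Rightarrow> rat poly fract fps" where
  "calF l a n = Abs_fps (\<lambda>d.
     Fract (\<Prod>k=1..l. \<Prod>r=1..a k * d. [:of_nat r, of_nat (a k):])
           (\<Prod>r=1..d. [:of_nat r, 1:] ^ n - [:0, 1:] ^ n))"

end

theory Submission
  imports Defs "HOL-Computational_Algebra.Polynomial_Factorial"
begin

text \<open>Write \<open>theta = w + q d/dq\<close>, which multiplies the coefficient of \<open>q^d\<close> by \<open>w + d\<close>.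
  Since \<open>theta (F / F(0,q)) = w \<cdot> Mop F\<close>, an operator \<open>P\<close> that is a polynomial of degree \<open>m\<close>
  in \<open>theta\<close> with coefficients in \<open>\<rat>[[q]]\<close> and satisfies \<open>P F = w^m E\<close> can be divided on the
  right by \<open>theta\<close>; evaluation at \<open>w = 0\<close> kills the remainder, leaving an operator of degree
  \<open>m - 1\<close> that sends \<open>Mop F\<close> to \<open>w^(m-1) E\<close>. By induction \<open>E = h(q) \<cdot> Mop^m F\<close>.

  For the hypergeometric series \<open>F\<close>, let \<open>A(w + d)\<close> be the numerator of \<open>F\<^sub>d\<^sub>+\<^sub>1 / F\<^sub>d\<close>; it is
  divisible by \<open>w + 1\<close>, say \<open>A = (w + 1) B\<close>. The recursion for the coefficients gives
  \<open>(theta^(n-1) - q B(theta)) F = w^(n-1) E\<close> with \<open>E\<^sub>d = w F\<^sub>d / (w + d)\<close>, and \<open>Mop E = F\<close>.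
  As \<open>Mop\<close> ignores factors \<open>h(q)\<close>, \<open>Mop^n F = Mop (Mop^(n-1) F) = Mop E = F\<close>.\<close>

unbundle fps_syntax

section \<open>Rational functions regular at \<open>w = 0\<close>\<close>

lemma to_fract_power: "to_fract (p ^ k) = to_fract p ^ k"
  by (induct k) simp_all

lemma to_fract_of_nat [simp]: "to_fract (of_nat k) = of_nat k"
  by (simp add: to_fract_def of_nat_fract)

lemma wvar_eq: "wvar = to_fract [:0, 1:]"
  by (simp add: wvar_def to_fract_def)

lemma const_fr_eq: "const_fr c = to_fract [:c:]"
  by (simp add: const_fr_def to_fract_def)

lemma to_fract_linear: "to_fract [:of_nat d, 1:] = wvar + of_nat d"
proof -
  have "[:of_nat d, 1:] = [:0, 1:] + (of_nat d :: rat poly)" by (simp add: of_nat_poly)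
  thus ?thesis by (simp add: wvar_eq)
qed

lemma wvar_nonzero [simp]: "wvar \<noteq> 0"
  by (simp add: wvar_eq)

lemma wvar_plus_of_nat_nonzero [simp]: "wvar + of_nat d \<noteq> 0"
  by (metis to_fract_linear to_fract_eq_0_iff pCons_eq_0_iff one_neq_zero)

lemma regular0_iff: "regular0 x \<longleftrightarrow> (\<exists>p q. poly q 0 \<noteq> 0 \<and> x = to_fract p / to_fract q)"
  by (simp add: regular0_def Fract_conv_to_fract)

lemma eval0_eq:
  assumes "poly q 0 \<noteq> 0"
  shows "eval0 (to_fract p / to_fract q) = poly p 0 / poly q 0"
  unfolding eval0_def
proof (rule the_equality)
  show "\<exists>p' q'. poly q' 0 \<noteq> 0 \<and> to_fract p / to_fract q = Fract p' q' \<and>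
      poly p 0 / poly q 0 = poly p' 0 / poly q' 0"
    using assms by (auto simp: Fract_conv_to_fract)
next
  fix c assume "\<exists>p' q'. poly q' 0 \<noteq> 0 \<and> to_fract p / to_fract q = Fract p' q' \<and>
      c = poly p' 0 / poly q' 0"
  then obtain p' q' where q': "poly q' 0 \<noteq> 0"
    and eq: "to_fract p / to_fract q = to_fract p' / to_fract q'" and c: "c = poly p' 0 / poly q' 0"
    by (auto simp: Fract_conv_to_fract)
  have "q \<noteq> 0" "q' \<noteq> 0" using assms q' by auto
  with eq have "to_fract (p * q') = to_fract (p' * q)"
    by (simp add: field_simps)
  hence "poly p 0 * poly q' 0 = poly p' 0 * poly q 0"
    by (metis to_fract_eq_iff poly_mult)
  thus "c = poly p 0 / poly q 0"
    using assms q' c by (simp add: frac_eq_eq)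
qed

lemma regular0_quotient: "poly q 0 \<noteq> 0 \<Longrightarrow> regular0 (to_fract p / to_fract q)"
  unfolding regular0_iff by blast

lemma regular0E:
  assumes "regular0 x"
  obtains p q where "poly q 0 \<noteq> 0" "x = to_fract p / to_fract q"
  using assms by (auto simp: regular0_iff)

lemma regular0_to_fract [simp]: "regular0 (to_fract p)"
  using regular0_quotient[of 1 p] by simp

lemma eval0_to_fract [simp]: "eval0 (to_fract p) = poly p 0"
  using eval0_eq[of 1 p] by simp

lemma regular0_wvar [simp]: "regular0 wvar" and eval0_wvar [simp]: "eval0 wvar = 0"
  by (simp_all add: wvar_eq)

lemma regular0_const_fr [simp]: "regular0 (const_fr c)"
  and eval0_const_fr [simp]: "eval0 (const_fr c) = c"
  by (simp_all add: const_fr_eq)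

lemma regular0_of_nat [simp]: "regular0 (of_nat k)" and eval0_of_nat [simp]: "eval0 (of_nat k) = of_nat k"
  using regular0_to_fract[of "of_nat k"] eval0_to_fract[of "of_nat k"]
  by (simp_all del: regular0_to_fract eval0_to_fract)

lemma regular0_0 [simp]: "regular0 0" and eval0_0 [simp]: "eval0 0 = 0"
  using regular0_of_nat[of 0] eval0_of_nat[of 0] by simp_all

lemma regular0_1 [simp]: "regular0 1" and eval0_1 [simp]: "eval0 1 = 1"
  using regular0_of_nat[of 1] eval0_of_nat[of 1] by simp_all

lemma regular0_add:
  assumes "regular0 x" "regular0 y"
  shows "regular0 (x + y)" "eval0 (x + y) = eval0 x + eval0 y"
proof -
  obtain p q p' q' where q: "poly q 0 \<noteq> 0" "poly q' 0 \<noteq> 0"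
    and xy: "x = to_fract p / to_fract q" "y = to_fract p' / to_fract q'"
    using assms by (meson regular0E)
  have "q \<noteq> 0" "q' \<noteq> 0" using q by auto
  hence sum: "x + y = to_fract (p * q' + p' * q) / to_fract (q * q')"
    using xy by (simp add: field_simps)
  show "regular0 (x + y)" unfolding sum using q by (intro regular0_quotient) simp
  have "eval0 (x + y) = poly (p * q' + p' * q) 0 / poly (q * q') 0"
    unfolding sum using q by (intro eval0_eq) simp
  also have "\<dots> = eval0 x + eval0 y"
    using q by (simp add: xy eval0_eq add_frac_eq)
  finally show "eval0 (x + y) = eval0 x + eval0 y" .
qed

lemma regular0_mult:
  assumes "regular0 x" "regular0 y"
  shows "regular0 (x * y)" "eval0 (x * y) = eval0 x * eval0 y"
proof -
  obtain p q p' q' where q: "poly q 0 \<noteq> 0" "poly q' 0 \<noteq> 0"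
    and xy: "x = to_fract p / to_fract q" "y = to_fract p' / to_fract q'"
    using assms by (meson regular0E)
  have prod: "x * y = to_fract (p * p') / to_fract (q * q')"
    using xy by simp
  show "regular0 (x * y)" unfolding prod using q by (intro regular0_quotient) simp
  have "eval0 (x * y) = poly (p * p') 0 / poly (q * q') 0"
    unfolding prod using q by (intro eval0_eq) simp
  also have "\<dots> = eval0 x * eval0 y"
    using q by (simp add: xy eval0_eq)
  finally show "eval0 (x * y) = eval0 x * eval0 y" .
qed

lemma regular0_sum:
  assumes "\<And>i. i \<in> A \<Longrightarrow> regular0 (f i)"
  shows "regular0 (sum f A)" "eval0 (sum f A) = (\<Sum>i\<in>A. eval0 (f i))"
  using assms by (induct A rule: infinite_finite_induct) (simp_all add: regular0_add)

lemma regular0_inverse: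
  assumes "regular0 x" "eval0 x \<noteq> 0"
  shows "regular0 (inverse x)" "eval0 (inverse x) = inverse (eval0 x)"
proof -
  obtain p q where q: "poly q 0 \<noteq> 0" and x: "x = to_fract p / to_fract q"
    using assms(1) by (meson regular0E)
  have p: "poly p 0 \<noteq> 0" using assms(2) q x by (auto simp: eval0_eq)
  have inv: "inverse x = to_fract q / to_fract p" using x by simp
  show "regular0 (inverse x)" unfolding inv using p by (rule regular0_quotient)
  show "eval0 (inverse x) = inverse (eval0 x)"
    unfolding inv x using p q by (simp add: eval0_eq)
qed

lemma regular0_divide_wvar:
  assumes "regular0 x" "eval0 x = 0"
  shows "regular0 (x / wvar)"
proof -
  obtain p q where q: "poly q 0 \<noteq> 0" and x: "x = to_fract p / to_fract q"
    using assms(1) by (meson regular0E)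
  have "poly p 0 = 0" using assms(2) q x by (simp add: eval0_eq)
  then obtain s where "p = [:0, 1:] * s"
    using poly_eq_0_iff_dvd[of p 0] by (auto elim: dvdE)
  hence "to_fract p = wvar * to_fract s"
    by (simp only: to_fract_mult wvar_eq)
  hence "x / wvar = to_fract s / to_fract q"
    by (simp add: x)
  thus ?thesis using q by (simp add: regular0_quotient)
qed

section \<open>Power series over \<open>\<rat>(w)\<close>\<close>

lemma const_fr_add: "const_fr (a + b) = const_fr a + const_fr b"
  and const_fr_mult: "const_fr (a * b) = const_fr a * const_fr b"
  and const_fr_0 [simp]: "const_fr 0 = 0"
  and const_fr_1 [simp]: "const_fr 1 = 1"
  and const_fr_uminus: "const_fr (- a) = - const_fr a"
  and const_fr_of_nat: "const_fr (of_nat k) = of_nat k"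
  and const_fr_eq_iff [simp]: "const_fr a = const_fr b \<longleftrightarrow> a = b"
  by (simp_all add: const_fr_eq flip: to_fract_add to_fract_mult to_fract_uminus to_fract_of_nat
      del: to_fract_add to_fract_mult to_fract_uminus to_fract_of_nat)
     (simp_all add: of_nat_poly one_pCons [symmetric])

lemma const_fr_sum: "const_fr (sum f A) = (\<Sum>x\<in>A. const_fr (f x))"
  by (induct A rule: infinite_finite_induct) (simp_all add: const_fr_add)

definition lift_fps :: "rat fps \<Rightarrow> rat poly fract fps" where
  "lift_fps f = Abs_fps (\<lambda>d. const_fr (f $ d))"

definition eval0_fps :: "rat poly fract fps \<Rightarrow> rat fps" where
  "eval0_fps F = Abs_fps (\<lambda>d. eval0 (F $ d))"

definition regular0_fps :: "rat poly fract fps \<Rightarrow> bool" where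
  "regular0_fps F \<longleftrightarrow> (\<forall>d. regular0 (F $ d))"

definition theta :: "rat poly fract fps \<Rightarrow> rat poly fract fps" where
  "theta X = fps_const wvar * X + fps_X * fps_deriv X"

lemma lift_fps_nth [simp]: "lift_fps f $ d = const_fr (f $ d)"
  by (simp add: lift_fps_def)

lemma eval0_fps_nth [simp]: "eval0_fps F $ d = eval0 (F $ d)"
  by (simp add: eval0_fps_def)

lemma lift_fps_add [simp]: "lift_fps (f + g) = lift_fps f + lift_fps g"
  by (rule fps_ext) (simp add: const_fr_add)

lemma lift_fps_mult [simp]: "lift_fps (f * g) = lift_fps f * lift_fps g"
  by (rule fps_ext) (simp add: fps_mult_nth const_fr_sum const_fr_mult)

lemma lift_fps_0 [simp]: "lift_fps 0 = 0"
  and lift_fps_1 [simp]: "lift_fps 1 = 1"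
  and lift_fps_uminus [simp]: "lift_fps (- f) = - lift_fps f"
  and lift_fps_X [simp]: "lift_fps fps_X = fps_X"
  and lift_fps_const [simp]: "lift_fps (fps_const c) = fps_const (const_fr c)"
  by (rule fps_ext; simp add: const_fr_uminus fps_X_def)+

lemma lift_fps_deriv [simp]: "lift_fps (fps_deriv f) = fps_deriv (lift_fps f)"
  by (rule fps_ext) (simp add: const_fr_mult const_fr_of_nat del: of_nat_Suc)

lemma lift_fps_inverse: "lift_fps (inverse f) = inverse (lift_fps f)"
proof (cases "f $ 0 = 0")
  case True
  hence "inverse f = 0" "inverse (lift_fps f) = 0" by simp_all
  thus ?thesis by (simp only: lift_fps_0)
next
  case False
  have "lift_fps f * lift_fps (inverse f) = 1"
    using inverse_mult_eq_1'[OF False] by (simp flip: lift_fps_mult)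
  thus ?thesis by (simp add: fps_inverse_unique)
qed

lemma eval0_fps_lift_fps [simp]: "eval0_fps (lift_fps f) = f"
  by (rule fps_ext) simp

lemma at0_eq: "at0 F = lift_fps (eval0_fps F)"
  by (simp add: at0_def lift_fps_def eval0_fps_def)

lemma regular0_fps_add: "regular0_fps F \<Longrightarrow> regular0_fps G \<Longrightarrow> regular0_fps (F + G)"
  by (simp add: regular0_fps_def regular0_add)

lemma regular0_fps_mult: "regular0_fps F \<Longrightarrow> regular0_fps G \<Longrightarrow> regular0_fps (F * G)"
  by (simp add: regular0_fps_def fps_mult_nth regular0_sum regular0_mult)

lemma regular0_fps_lift_fps [simp]: "regular0_fps (lift_fps f)"
  by (simp add: regular0_fps_def)

lemma regular0_fps_const [simp]: "regular0 c \<Longrightarrow> regular0_fps (fps_const c)"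
  by (simp add: regular0_fps_def fps_const_def)

lemma fps_X_mult_deriv_nth: "(fps_X * fps_deriv f) $ d = of_nat d * f $ d"
  by (cases d) (simp_all del: of_nat_Suc)

lemma regular0_fps_X_mult_deriv: "regular0_fps F \<Longrightarrow> regular0_fps (fps_X * fps_deriv F)"
  by (simp add: regular0_fps_def fps_X_mult_deriv_nth regular0_mult)

lemma regular0_fps_theta: "regular0_fps F \<Longrightarrow> regular0_fps (theta F)"
  by (simp add: theta_def regular0_fps_add regular0_fps_mult regular0_fps_X_mult_deriv)

lemma eval0_fps_add:
  "regular0_fps F \<Longrightarrow> regular0_fps G \<Longrightarrow> eval0_fps (F + G) = eval0_fps F + eval0_fps G"
  by (rule fps_ext) (simp add: regular0_fps_def regular0_add)

lemma eval0_fps_mult: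
  "regular0_fps F \<Longrightarrow> regular0_fps G \<Longrightarrow> eval0_fps (F * G) = eval0_fps F * eval0_fps G"
  by (rule fps_ext) (simp add: regular0_fps_def fps_mult_nth regular0_sum regular0_mult)

lemma eval0_fps_wvar_mult: "regular0_fps F \<Longrightarrow> eval0_fps (fps_const wvar * F) = 0"
  by (rule fps_ext) (simp add: regular0_fps_def regular0_mult)

lemma theta_nth: "theta X $ d = (wvar + of_nat d) * X $ d"
  by (simp add: theta_def fps_X_mult_deriv_nth algebra_simps)

lemma theta_0 [simp]: "theta 0 = 0"
  by (simp add: theta_def)

lemma theta_add: "theta (X + Y) = theta X + theta Y"
  by (simp add: theta_def algebra_simps)

lemma theta_mult: "theta (f * X) = f * theta X + (fps_X * fps_deriv f) * X"
  by (simp add: theta_def algebra_simps)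

lemma theta_wvar_mult: "theta (fps_const wvar * X) = fps_const wvar * theta X"
  by (simp add: theta_def algebra_simps)

section \<open>The operator \<open>Mop\<close>\<close>

definition normalize0 :: "rat poly fract fps \<Rightarrow> rat poly fract fps" where
  "normalize0 F = F * lift_fps (inverse (eval0_fps F))"

lemma Mop_eq: "Mop F = normalize0 F + fps_const (inverse wvar) * (fps_X * fps_deriv (normalize0 F))"
  by (simp add: Mop_def Let_def at0_eq normalize0_def lift_fps_inverse)

lemma Mop_nth: "Mop F $ d = normalize0 F $ d + inverse wvar * (of_nat d * normalize0 F $ d)"
  by (simp add: Mop_eq fps_X_mult_deriv_nth)

lemma Pset_regular0_fps: "F \<in> Pset \<Longrightarrow> regular0_fps F"
  by (simp add: Pset_def regular0_fps_def)

lemma Pset_eval0_fps_nth_0: "F \<in> Pset \<Longrightarrow> eval0_fps F $ 0 = 1"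
  by (simp add: Pset_def)

lemma regular0_fps_normalize0: "F \<in> Pset \<Longrightarrow> regular0_fps (normalize0 F)"
  by (simp add: normalize0_def regular0_fps_mult Pset_regular0_fps)

lemma eval0_fps_normalize0: "F \<in> Pset \<Longrightarrow> eval0_fps (normalize0 F) = 1"
  using Pset_eval0_fps_nth_0[of F]
  by (simp add: normalize0_def eval0_fps_mult Pset_regular0_fps inverse_mult_eq_1')

lemma lift_fps_mult_normalize0: "F \<in> Pset \<Longrightarrow> lift_fps (eval0_fps F) * normalize0 F = F"
  using Pset_eval0_fps_nth_0[of F]
  by (simp add: normalize0_def mult.left_commute inverse_mult_eq_1' flip: lift_fps_mult)

lemma theta_normalize0: "theta (normalize0 F) = fps_const wvar * Mop F"
proof -
  have "fps_const wvar * fps_const (inverse wvar) = 1" by simp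
  thus ?thesis unfolding Mop_eq theta_def distrib_left mult.assoc[symmetric] by simp
qed

lemma Mop_Pset: assumes F: "F \<in> Pset" shows "Mop F \<in> Pset"
proof -
  have reg: "regular0 (normalize0 F $ d)" for d
    using regular0_fps_normalize0[OF F] by (simp add: regular0_fps_def)
  have ev: "eval0 (normalize0 F $ d) = (if d = 0 then 1 else 0)" for d
    using arg_cong[OF eval0_fps_normalize0[OF F], of "\<lambda>f. f $ d"] by simp
  have "regular0 (Mop F $ d)" for d
  proof -
    have "regular0 (of_nat d * normalize0 F $ d / wvar)"
      using regular0_mult[OF regular0_of_nat reg, of d] ev[of d]
      by (intro regular0_divide_wvar) auto
    thus ?thesis
      unfolding Mop_nth using reg by (simp add: regular0_add divide_inverse mult.commute)
  qed
  moreover have "normalize0 F $ 0 = 1"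
    using F by (simp add: normalize0_def Pset_def)
  ultimately show ?thesis by (simp add: Pset_def Mop_nth)
qed

lemma funpow_Mop_Pset: "F \<in> Pset \<Longrightarrow> (Mop ^^ k) F \<in> Pset"
  by (induct k) (simp_all add: Mop_Pset)

lemma Mop_lift_fps_mult:
  assumes F: "F \<in> Pset" and hF: "lift_fps h * F \<in> Pset"
  shows "Mop (lift_fps h * F) = Mop F"
proof -
  have "h $ 0 \<noteq> 0"
    using hF F by (auto simp: Pset_def)
  hence "normalize0 (lift_fps h * F) = normalize0 F"
    by (simp add: normalize0_def eval0_fps_mult Pset_regular0_fps[OF F] fps_inverse_mult
        algebra_simps flip: lift_fps_mult lift_fps_inverse)
       (simp add: mult.assoc[symmetric] inverse_mult_eq_1')
  thus ?thesis by (simp add: Mop_eq)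
qed

section \<open>Polynomials in \<open>theta\<close>\<close>

text \<open>\<open>theta_op m P\<close>: \<open>P\<close> is a polynomial of degree at most \<open>m\<close> in \<open>theta\<close> whose coefficients,
  multiplied from the left, are series in \<open>q\<close> alone.\<close>
inductive theta_op :: "nat \<Rightarrow> (rat poly fract fps \<Rightarrow> rat poly fract fps) \<Rightarrow> bool" where
  mult: "theta_op 0 (\<lambda>X. lift_fps f * X)"
| add: "theta_op m P \<Longrightarrow> theta_op m Q \<Longrightarrow> theta_op m (\<lambda>X. P X + Q X)"
| left_mult: "theta_op m P \<Longrightarrow> theta_op m (\<lambda>X. lift_fps f * P X)"
| theta: "theta_op m P \<Longrightarrow> theta_op (Suc m) (\<lambda>X. theta (P X))"
| Suc: "theta_op m P \<Longrightarrow> theta_op (Suc m) P"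

lemma theta_op_mono: "theta_op k P \<Longrightarrow> k \<le> m \<Longrightarrow> theta_op m P"
  by (induct m) (auto intro: theta_op.Suc simp: le_Suc_eq)

lemma theta_op_zero: "theta_op m (\<lambda>_. 0)"
  using theta_op_mono[OF theta_op.mult[of 0]] by simp

lemma theta_op_0_imp_mult: "theta_op m P \<Longrightarrow> m = 0 \<Longrightarrow> \<exists>f. P = (\<lambda>X. lift_fps f * X)"
proof (induct rule: theta_op.induct)
  case (add m P Q)
  then obtain f g where "P = (\<lambda>X. lift_fps f * X)" "Q = (\<lambda>X. lift_fps g * X)" by blast
  thus ?case by (intro exI[of _ "f + g"]) (simp add: algebra_simps)
next
  case (left_mult m P f)
  then obtain g where "P = (\<lambda>X. lift_fps g * X)" by blast
  thus ?case by (intro exI[of _ "f * g"]) (simp add: algebra_simps)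
qed auto

lemma theta_op_regular0_fps: "theta_op m P \<Longrightarrow> regular0_fps X \<Longrightarrow> regular0_fps (P X)"
  by (induct rule: theta_op.induct) (auto intro: regular0_fps_add regular0_fps_mult regular0_fps_theta)

lemma theta_op_wvar_mult: "theta_op m P \<Longrightarrow> P (fps_const wvar * X) = fps_const wvar * P X"
  by (induct rule: theta_op.induct) (auto simp: theta_wvar_mult mult.left_commute distrib_left)

text \<open>The clause for \<open>k = 0\<close> compensates for the truncated subtraction in \<open>k - 1\<close>.\<close>
lemma theta_op_right_divide:
  "theta_op k P \<Longrightarrow> \<exists>P1 r. theta_op (k - 1) P1 \<and> (k = 0 \<longrightarrow> P1 = (\<lambda>_. 0)) \<and>
     (\<forall>X. P (lift_fps i * X) = P1 (theta X) + lift_fps r * X)"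
proof (induct rule: theta_op.induct)
  case (mult f)
  show ?case by (intro exI[of _ "\<lambda>_. 0"] exI[of _ "f * i"]) (simp add: theta_op_zero)
next
  case (add m P Q)
  then obtain P1 r Q1 s where P: "theta_op (m - 1) P1" "m = 0 \<longrightarrow> P1 = (\<lambda>_. 0)"
      "\<forall>X. P (lift_fps i * X) = P1 (theta X) + lift_fps r * X"
    and Q: "theta_op (m - 1) Q1" "m = 0 \<longrightarrow> Q1 = (\<lambda>_. 0)"
      "\<forall>X. Q (lift_fps i * X) = Q1 (theta X) + lift_fps s * X"
    by blast
  show ?case
    by (intro exI[of _ "\<lambda>X. P1 X + Q1 X"] exI[of _ "r + s"])
       (use P Q in \<open>auto intro: theta_op.add simp: distrib_right add_ac\<close>)
next
  case (left_mult m P f)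
  then obtain P1 r where P: "theta_op (m - 1) P1" "m = 0 \<longrightarrow> P1 = (\<lambda>_. 0)"
      "\<forall>X. P (lift_fps i * X) = P1 (theta X) + lift_fps r * X"
    by blast
  show ?case
    by (intro exI[of _ "\<lambda>X. lift_fps f * P1 X"] exI[of _ "f * r"])
       (use P in \<open>auto intro: theta_op.left_mult simp: distrib_left mult.assoc\<close>)
next
  case (theta m P)
  then obtain P1 r where P: "theta_op (m - 1) P1" "m = 0 \<longrightarrow> P1 = (\<lambda>_. 0)"
      "\<forall>X. P (lift_fps i * X) = P1 (theta X) + lift_fps r * X"
    by blast
  have "theta_op m (\<lambda>X. theta (P1 X) + lift_fps r * X)"
  proof (cases m)
    case 0
    thus ?thesis using P(2) theta_op.mult[of r] by simp
  next
    case (Suc m')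
    thus ?thesis using P(1) theta_op.theta[of m' P1]
      by (auto intro: theta_op.add theta_op_mono[OF theta_op.mult])
  qed
  moreover have "theta (P (lift_fps i * X)) =
      theta (P1 (theta X)) + lift_fps r * theta X + lift_fps (fps_X * fps_deriv r) * X" for X
    using P(3) by (simp add: theta_add theta_mult)
  ultimately show ?case
    by (intro exI[of _ "\<lambda>X. theta (P1 X) + lift_fps r * X"] exI[of _ "fps_X * fps_deriv r"])
       (simp add: add.assoc)
next
  case (Suc m P)
  then obtain P1 r where P: "theta_op (m - 1) P1" "m = 0 \<longrightarrow> P1 = (\<lambda>_. 0)"
      "\<forall>X. P (lift_fps i * X) = P1 (theta X) + lift_fps r * X"
    by blast
  have "theta_op m P1"
    using P(1,2) by (cases m) (auto intro: theta_op_zero theta_op.Suc)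
  thus ?case using P(3) by auto
qed

lemma theta_op_Mop_descent_step:
  assumes F: "F \<in> Pset" and P: "theta_op (Suc m) P" and E: "regular0_fps E"
    and PF: "P F = fps_const (wvar ^ Suc m) * E"
  shows "\<exists>P1. theta_op m P1 \<and> P1 (Mop F) = fps_const (wvar ^ m) * E"
proof -
  obtain P1 r where P1: "theta_op m P1"
    and div: "\<And>X. P (lift_fps (eval0_fps F) * X) = P1 (theta X) + lift_fps r * X"
    using theta_op_right_divide[OF P, of "eval0_fps F"] by auto
  have reg: "regular0_fps (P1 (Mop F))" "regular0_fps (normalize0 F)"
    using theta_op_regular0_fps[OF P1 Pset_regular0_fps[OF Mop_Pset[OF F]]]
      regular0_fps_normalize0[OF F] by auto
  have "P F = P (lift_fps (eval0_fps F) * normalize0 F)"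
    by (simp add: lift_fps_mult_normalize0[OF F])
  also have "\<dots> = fps_const wvar * P1 (Mop F) + lift_fps r * normalize0 F"
    by (simp add: div theta_normalize0 theta_op_wvar_mult[OF P1])
  finally have eq: "fps_const wvar * (fps_const (wvar ^ m) * E) =
      fps_const wvar * P1 (Mop F) + lift_fps r * normalize0 F"
    by (simp add: PF mult.assoc flip: fps_const_mult)
  have "eval0_fps (fps_const wvar * (fps_const (wvar ^ m) * E)) = 0"
    using E by (intro eval0_fps_wvar_mult regular0_fps_mult regular0_fps_const)
       (simp_all add: wvar_eq flip: to_fract_power)
  moreover have "eval0_fps (fps_const wvar * P1 (Mop F) + lift_fps r * normalize0 F) = r"
    using reg by (simp add: eval0_fps_add regular0_fps_mult eval0_fps_wvar_mult)
      (simp add: eval0_fps_mult eval0_fps_normalize0[OF F])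
  ultimately have "r = 0" using eq by simp
  with eq P1 show ?thesis by auto
qed

lemma theta_op_Mop_descent:
  assumes "F \<in> Pset" "theta_op m P" "regular0_fps E" "P F = fps_const (wvar ^ m) * E"
  shows "\<exists>h. E = lift_fps h * (Mop ^^ m) F"
  using assms
proof (induct m arbitrary: F P)
  case 0
  then obtain f where "P = (\<lambda>X. lift_fps f * X)"
    using theta_op_0_imp_mult by blast
  thus ?case using 0 by auto
next
  case (Suc m)
  then obtain P1 where "theta_op m P1" "P1 (Mop F) = fps_const (wvar ^ m) * E"
    using theta_op_Mop_descent_step by blast
  with Suc Mop_Pset show ?case
    by (simp add: funpow_Suc_right del: funpow.simps)
qed

definition poly_theta :: "rat poly \<Rightarrow> rat poly fract fps \<Rightarrow> rat poly fract fps" where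
  "poly_theta p X = Abs_fps (\<lambda>d. to_fract (p \<circ>\<^sub>p [:of_nat d, 1:]) * X $ d)"

lemma poly_theta_nth: "poly_theta p X $ d = to_fract (p \<circ>\<^sub>p [:of_nat d, 1:]) * X $ d"
  by (simp add: poly_theta_def)

lemma poly_theta_0 [simp]: "poly_theta 0 X = 0"
  by (rule fps_ext) (simp add: poly_theta_nth)

lemma poly_theta_pCons:
  "poly_theta (pCons c p) X = lift_fps (fps_const c) * X + theta (poly_theta p X)"
proof (rule fps_ext)
  fix d
  have "to_fract (pCons c p \<circ>\<^sub>p [:of_nat d, 1:]) =
      const_fr c + (wvar + of_nat d) * to_fract (p \<circ>\<^sub>p [:of_nat d, 1:])"
    by (simp only: pcompose_pCons to_fract_add to_fract_mult to_fract_linear const_fr_eq)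
  thus "poly_theta (pCons c p) X $ d = (lift_fps (fps_const c) * X + theta (poly_theta p X)) $ d"
    by (simp add: poly_theta_nth theta_nth algebra_simps)
qed

lemma theta_op_poly_theta: "theta_op (degree p) (poly_theta p)"
proof (induct p rule: pCons_induct)
  case 0
  show ?case using theta_op_zero by simp
next
  case (pCons c p)
  have "theta_op (degree (pCons c p)) (\<lambda>X. lift_fps (fps_const c) * X + theta (poly_theta p X))"
  proof (cases "p = 0")
    case True
    thus ?thesis using theta_op.mult[of "fps_const c"] by simp
  next
    case False
    have "theta_op (Suc (degree p)) (\<lambda>X. lift_fps (fps_const c) * X)"
      by (rule theta_op_mono[OF theta_op.mult]) simp
    moreover have "theta_op (Suc (degree p)) (\<lambda>X. theta (poly_theta p X))"
      by (rule theta_op.theta[OF pCons(2)])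
    moreover have "degree (pCons c p) = Suc (degree p)"
      using False by simp
    ultimately show ?thesis
      by (metis theta_op.add)
  qed
  thus ?case by (simp add: poly_theta_pCons)
qed

lemma pcompose_power_left: "p ^ k \<circ>\<^sub>p q = (p \<circ>\<^sub>p q) ^ k"
  by (induct k) (simp_all add: pcompose_mult pcompose_1)

lemma poly_theta_power_nth: "poly_theta ([:0, 1:] ^ k) X $ d = (wvar + of_nat d) ^ k * X $ d"
  by (simp add: poly_theta_nth pcompose_power_left pcompose_pCons to_fract_power to_fract_linear)

section \<open>The hypergeometric series \<open>calF\<close>\<close>

definition calF_numer :: "nat \<Rightarrow> (nat \<Rightarrow> nat) \<Rightarrow> nat \<Rightarrow> rat poly" where
  "calF_numer l a d = (\<Prod>k=1..l. \<Prod>r=1..a k * d. [:of_nat r, of_nat (a k):])"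

definition calF_denom :: "nat \<Rightarrow> nat \<Rightarrow> rat poly" where
  "calF_denom n d = (\<Prod>r=1..d. [:of_nat r, 1:] ^ n - [:0, 1:] ^ n)"

text \<open>The ratio of consecutive coefficients of \<open>calF\<close> is
  \<open>calF_ratio l a (w + d) / ((w + d + 1)^n - w^n)\<close>.\<close>
definition calF_ratio :: "nat \<Rightarrow> (nat \<Rightarrow> nat) \<Rightarrow> rat poly" where
  "calF_ratio l a = (\<Prod>k=1..l. \<Prod>s=1..a k. [:of_nat s, of_nat (a k):])"

lemma calF_nth: "calF l a n $ d = to_fract (calF_numer l a d) / to_fract (calF_denom n d)"
  by (simp add: calF_def calF_numer_def calF_denom_def Fract_conv_to_fract)

lemma calF_numer_0 [simp]: "calF_numer l a 0 = 1"
  and calF_denom_0 [simp]: "calF_denom n 0 = 1"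
  by (simp_all add: calF_numer_def calF_denom_def)

lemma calF_nth_0 [simp]: "calF l a n $ 0 = 1"
  by (simp add: calF_nth)

lemma calF_numer_Suc:
  "calF_numer l a (Suc d) = calF_numer l a d * (calF_ratio l a \<circ>\<^sub>p [:of_nat d, 1:])"
proof -
  have split: "(\<Prod>r=1..b * Suc d. [:of_nat r, of_nat b:]) =
      (\<Prod>r=1..b * d. [:of_nat r, of_nat b:]) * (\<Prod>s=1..b. [:of_nat (b * d + s), of_nat b:] :: rat poly)"
    for b
  proof -
    have "(\<Prod>r=1..b * d + b. [:of_nat r, of_nat b:] :: rat poly) =
        (\<Prod>r=1..b * d. [:of_nat r, of_nat b:]) * (\<Prod>r=b * d + 1..b * d + b. [:of_nat r, of_nat b:])"
      by (rule prod.ub_add_nat) simp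
    also have "(\<Prod>r=b * d + 1..b * d + b. [:of_nat r, of_nat b:] :: rat poly) =
        (\<Prod>s=1..b. [:of_nat (b * d + s), of_nat b:])"
      using prod.shift_bounds_cl_nat_ivl[of "\<lambda>r. [:of_nat r, of_nat b:] :: rat poly" 1 "b * d" b]
      by (simp add: add.commute)
    finally show ?thesis by (simp add: add.commute)
  qed
  have shift: "[:of_nat s, of_nat b:] \<circ>\<^sub>p [:of_nat d, 1:] = ([:of_nat (b * d + s), of_nat b:] :: rat poly)"
    for s b
    by (simp add: pcompose_pCons algebra_simps)
  show ?thesis
    unfolding calF_numer_def calF_ratio_def pcompose_prod split prod.distrib shift ..
qed

lemma calF_denom_Suc:
  "calF_denom n (Suc d) = calF_denom n d * ([:of_nat (Suc d), 1:] ^ n - [:0, 1:] ^ n)"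
  by (simp add: calF_denom_def)

lemma poly_calF_denom_0: "n \<ge> 1 \<Longrightarrow> poly (calF_denom n d) 0 \<noteq> 0"
  by (simp add: calF_denom_def poly_prod zero_power)

lemma calF_Pset: "n \<ge> 1 \<Longrightarrow> calF l a n \<in> Pset"
  by (simp add: Pset_def calF_nth poly_calF_denom_0 regular0_quotient)

lemma calF_ratio_root:
  assumes "k \<in> {1..l}" "a k > 0"
  shows "calF_ratio l a = [:1, 1:] * (calF_ratio l a div [:1, 1:])"
proof -
  have "(\<Prod>s=1..a k. poly [:of_nat s, of_nat (a k):] (-1 :: rat)) = 0"
    using assms(2) by (intro prod_zero bexI[of _ "a k"]) auto
  hence "\<exists>j\<in>{1..l}. (\<Prod>s=1..a j. poly [:of_nat s, of_nat (a j):] (-1 :: rat)) = 0"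
    using assms(1) by blast
  hence "poly (calF_ratio l a) (-1) = 0"
    unfolding calF_ratio_def poly_prod by (rule prod_zero[OF finite_atLeastAtMost])
  hence "[:1, 1:] dvd calF_ratio l a"
    using poly_eq_0_iff_dvd[of "calF_ratio l a" "-1"] by simp
  thus ?thesis by (rule dvd_mult_div_cancel[symmetric])
qed

lemma degree_calF_ratio_le: "degree (calF_ratio l a) \<le> (\<Sum>k=1..l. a k)"
proof -
  have "degree (calF_ratio l a) \<le> (\<Sum>k=1..l. degree (\<Prod>s=1..a k. [:of_nat s, of_nat (a k):] :: rat poly))"
    unfolding calF_ratio_def using degree_prod_sum_le[of "{1..l}"] by (simp add: o_def)
  also have "\<dots> \<le> (\<Sum>k=1..l. \<Sum>s=1..a k. degree ([:of_nat s, of_nat (a k):] :: rat poly))"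
    by (intro sum_mono order_trans[OF degree_prod_sum_le]) (simp_all add: o_def)
  also have "\<dots> \<le> (\<Sum>k=1..l. \<Sum>s=1..a k. 1)"
    by (intro sum_mono) simp
  finally show ?thesis by simp
qed

lemma degree_calF_ratio_quot_le:
  assumes "k \<in> {1..l}" "a k > 0"
  shows "degree (calF_ratio l a div [:1, 1:]) \<le> (\<Sum>k=1..l. a k) - 1"
proof -
  let ?B = "calF_ratio l a div [:1, 1:]"
  have root: "calF_ratio l a = [:1, 1:] * ?B"
    by (rule calF_ratio_root[of k l a, OF assms])
  moreover have "calF_ratio l a \<noteq> 0"
    by (auto simp: calF_ratio_def)
  ultimately have "?B \<noteq> 0" by auto
  hence "degree ([:1, 1:] * ?B) = degree [:1, 1 :: rat:] + degree ?B"
    by (intro degree_mult_eq) simp_all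
  hence "degree (calF_ratio l a) = Suc (degree ?B)"
    using root by simp
  thus ?thesis using degree_calF_ratio_le[of l a] by simp
qed

definition calE :: "nat \<Rightarrow> (nat \<Rightarrow> nat) \<Rightarrow> nat \<Rightarrow> rat poly fract fps" where
  "calE l a n = Abs_fps (\<lambda>d. wvar * calF l a n $ d / (wvar + of_nat d))"

lemma calE_nth: "calE l a n $ d = wvar * calF l a n $ d / (wvar + of_nat d)"
  by (simp add: calE_def)

lemma calE_coefficients:
  assumes "n \<ge> 1"
  shows "regular0 (calE l a n $ d) \<and> eval0 (calE l a n $ d) = (if d = 0 then 1 else 0)"
proof (cases "d = 0")
  case False
  have shift: "regular0 (wvar + of_nat d)" "eval0 (wvar + of_nat d) = of_nat d"
    by (simp_all add: regular0_add)
  have "regular0 (calF l a n $ d)"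
    using calF_Pset[OF assms] by (simp add: Pset_def)
  moreover have "calE l a n $ d = wvar * (calF l a n $ d * inverse (wvar + of_nat d))"
    by (simp add: calE_nth divide_inverse)
  ultimately show ?thesis
    using shift False by (simp add: regular0_mult regular0_inverse)
qed (simp add: calE_nth)

lemma calE_Pset: "n \<ge> 1 \<Longrightarrow> calE l a n \<in> Pset"
  using calE_coefficients[of n l a] by (simp add: Pset_def calE_nth)

lemma Mop_calE: assumes "n \<ge> 1" shows "Mop (calE l a n) = calF l a n"
proof -
  have "eval0_fps (calE l a n) = 1"
    by (rule fps_ext) (simp add: calE_coefficients[OF assms])
  hence "normalize0 (calE l a n) = calE l a n"
    by (simp add: normalize0_def)
  moreover have "x + inverse wvar * (of_nat d * x) = (wvar + of_nat d) / wvar * x" for x d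
    by (simp add: field_simps)
  moreover have "(wvar + of_nat d) / wvar * (wvar * y / (wvar + of_nat d)) = y" for y d
    by simp
  ultimately show ?thesis
    by (intro fps_ext) (simp only: Mop_nth calE_nth)
qed

definition calF_operator :: "nat \<Rightarrow> (nat \<Rightarrow> nat) \<Rightarrow> nat \<Rightarrow> rat poly fract fps \<Rightarrow> rat poly fract fps"
  where "calF_operator l a n X =
    poly_theta ([:0, 1:] ^ (n - 1)) X + lift_fps (- fps_X) * poly_theta (calF_ratio l a div [:1, 1:]) X"

lemma theta_op_calF_operator:
  assumes "k \<in> {1..l}" "a k > 0" "(\<Sum>k=1..l. a k) \<le> n"
  shows "theta_op (n - 1) (calF_operator l a n)"
proof -
  have "theta_op (n - 1) (poly_theta ([:0, 1:] ^ (n - 1)))"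
    using theta_op_poly_theta[of "[:0, 1:] ^ (n - 1)"] by (simp add: degree_power_eq)
  moreover have "theta_op (n - 1) (poly_theta (calF_ratio l a div [:1, 1:]))"
    using degree_calF_ratio_quot_le[of k l a, OF assms(1,2)] assms(3)
    by (intro theta_op_mono[OF theta_op_poly_theta]) simp
  ultimately show ?thesis
    unfolding calF_operator_def[abs_def] by (intro theta_op.add theta_op.left_mult)
qed

lemma to_fract_shift_power_diff:
  "to_fract ([:of_nat d, 1:] ^ n - [:0, 1:] ^ n) = (wvar + of_nat d) ^ n - wvar ^ n"
  by (simp only: to_fract_diff to_fract_power to_fract_linear wvar_eq)

lemma calF_nth_Suc:
  assumes "k \<in> {1..l}" "a k > 0"
  shows "calF l a n $ Suc e = calF l a n $ e * (wvar + of_nat (Suc e)) *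
    to_fract ((calF_ratio l a div [:1, 1:]) \<circ>\<^sub>p [:of_nat e, 1:]) /
    ((wvar + of_nat (Suc e)) ^ n - wvar ^ n)"
proof -
  have "[:1, 1:] \<circ>\<^sub>p [:of_nat e, 1:] = [:of_nat (Suc e), 1 :: rat:]"
    by (simp add: pcompose_pCons)
  hence ratio: "calF_ratio l a \<circ>\<^sub>p [:of_nat e, 1:] =
      [:of_nat (Suc e), 1:] * ((calF_ratio l a div [:1, 1:]) \<circ>\<^sub>p [:of_nat e, 1:])"
    by (subst calF_ratio_root[of k l a, OF assms]) (simp only: pcompose_mult)
  have "calF l a n $ Suc e = to_fract (calF_numer l a e * ([:of_nat (Suc e), 1:] *
      ((calF_ratio l a div [:1, 1:]) \<circ>\<^sub>p [:of_nat e, 1:]))) /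
      to_fract (calF_denom n e * ([:of_nat (Suc e), 1:] ^ n - [:0, 1:] ^ n))"
    by (simp only: calF_nth calF_numer_Suc calF_denom_Suc ratio)
  thus ?thesis
    by (simp only: to_fract_mult to_fract_shift_power_diff to_fract_linear calF_nth)
      (simp add: mult.assoc)
qed

lemma wvar_shift_power_diff_nonzero: "n \<ge> 1 \<Longrightarrow> (wvar + of_nat (Suc e)) ^ n - wvar ^ n \<noteq> 0"
proof -
  assume "n \<ge> 1"
  hence "poly ([:of_nat (Suc e), 1:] ^ n - [:0, 1:] ^ n :: rat poly) 0 \<noteq> 0"
    by (simp add: zero_power)
  thus ?thesis
    by (metis to_fract_shift_power_diff poly_0 to_fract_eq_0_iff)
qed

lemma calF_operator_calF:
  assumes "k \<in> {1..l}" "a k > 0" "n \<ge> 1"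
  shows "calF_operator l a n (calF l a n) = fps_const (wvar ^ (n - 1)) * calE l a n"
proof (rule fps_ext)
  fix d
  show "calF_operator l a n (calF l a n) $ d = (fps_const (wvar ^ (n - 1)) * calE l a n) $ d"
  proof (cases d)
    case 0
    thus ?thesis by (simp add: calF_operator_def poly_theta_power_nth calE_nth)
  next
    case (Suc e)
    obtain m where m: "n = Suc m" using assms(3) by (cases n) auto
    define u where "u = wvar + of_nat (Suc e)"
    define B where "B = to_fract ((calF_ratio l a div [:1, 1:]) \<circ>\<^sub>p [:of_nat e, 1:])"
    have u: "u \<noteq> 0" and un: "u ^ n - wvar ^ n \<noteq> 0"
      using wvar_shift_power_diff_nonzero[OF assms(3)] by (simp_all add: u_def del: of_nat_Suc)
    have F_Suc: "calF l a n $ Suc e = calF l a n $ e * u * B / (u ^ n - wvar ^ n)"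
      unfolding u_def B_def by (rule calF_nth_Suc[of k l a, OF assms(1,2)])
    have "calF_operator l a n (calF l a n) $ Suc e =
        u ^ (n - 1) * calF l a n $ Suc e - B * calF l a n $ e"
      by (simp add: calF_operator_def poly_theta_power_nth u_def B_def) (simp add: poly_theta_nth)
    also have "\<dots> = wvar ^ (n - 1) * (wvar * calF l a n $ Suc e / u)"
      unfolding F_Suc using u un m by (simp add: field_simps)
    finally show ?thesis
      by (simp add: Suc calE_nth u_def)
  qed
qed

theorem Mop_funpow_calF:
  assumes "k \<in> {1..l}" "a k > 0" "(\<Sum>k=1..l. a k) \<le> n"
  shows "(Mop ^^ n) (calF l a n) = calF l a n"
proof -
  have "a k \<le> (\<Sum>k=1..l. a k)"
    using assms(1) by (simp add: member_le_sum)
  hence n: "n \<ge> 1" using assms(2,3) by linarith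
  have F: "calF l a n \<in> Pset" and E: "calE l a n \<in> Pset"
    using calF_Pset[OF n] calE_Pset[OF n] .
  obtain h where h: "calE l a n = lift_fps h * (Mop ^^ (n - 1)) (calF l a n)"
    using theta_op_Mop_descent[OF F theta_op_calF_operator[OF assms] Pset_regular0_fps[OF E]
        calF_operator_calF[of k l a, OF assms(1,2) n]] by blast
  have "calF l a n = Mop (calE l a n)"
    by (rule Mop_calE[OF n, symmetric])
  also have "\<dots> = Mop ((Mop ^^ (n - 1)) (calF l a n))"
    using E unfolding h by (intro Mop_lift_fps_mult funpow_Mop_Pset[OF F])
  also have "\<dots> = (Mop ^^ n) (calF l a n)"
    using n by (cases n) simp_all
  finally show ?thesis by simp
qed

theorem lemma4p1:
  fixes n l :: nat and a :: "nat \<Rightarrow> nat"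
  assumes "n \<ge> 2" and "l \<ge> 1"
    and "\<forall>k\<in>{1..l}. a k \<ge> 2"
    and "(\<Sum>k=1..l. a k) = n"
  shows "(Mop ^^ n) (calF l a n) = calF l a n"
proof -
  have "1 \<in> {1..l}" using assms(2) by simp
  moreover from this have "a 1 > 0" using assms(3) by fastforce
  ultimately show ?thesis using assms(4) by (intro Mop_funpow_calF) simp_all
qed

end
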